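(* Let $R$ be a semistandard cylindric tableau and $S$ a set of boxes satisfying the input conditions of full multi-insertion, and perform $\operatorname{FullMulti}(R,S)$. Then for every row $r$, the list of entries inserted into row $r$ during the one-step phases (placed into a box of row $r$, whether by landing or by bumping), in the order in which they were inserted, is weakly increasing.
   Context: Fix integers $n>k\ge1$. A cylindric partition is a weakly decreasing integer sequence $(\lambda_m)_{m\in\mathbb Z}$ with $\lambda_m=\lambda_{m+k}+n-k$. A point $(x,y)\in\mathbb Z^2$ lies in $\lambda$ if $y\le\lambda_x$. Boxes are classes of points modulo translation by multiples of $(-k,n-k)$; row $x$ of the cylinder is the image of plane row $x$ (indexed mod $k$), column $y$ the image of plane column $y$; within a row boxes are ordered left to right by $y$-coordinates of representatives in a fixed plane row. $\mu\subseteq\lambda$ means $\mu_m\le\lambda_m$ for all $m$. A (semistandard cylindric) tableau of shape $\lambda/\mu$ is a map from the boxes in $\lambda$ but not $\mu$ to a totally ordered alphabet, weakly increasing along plane rows and strictly increasing down plane columns; its shapes are part of its data. Full multi-insertion $\operatorname{FullMulti}(R,S)$: input a tableau $R$ with outer shape $\lambda$, inner shape $\mu$, and a set $S$ of boxes not in $\mu$, no two in the same column, such that $\mu$ plus $S$ is a cylindric partition. Choose an integer $r_0$. For $h=r_0,\dots,r_0+k-1$, go through the boxes of $S$ in row $h$ from left to right: if the box is in $\lambda$, remove its entry $x$ and append $(x,h+1)$ to a queue; otherwise add the box to $\lambda$. All boxes of $S$ are added to the inner shape. Then, while the current queue $q$ is nonempty: start an empty queue $q'$; remove pairs $(x,s)$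 from the front of $q$ one at a time; if $x$ is $\ge$ every entry in row $s$, put $x$ into the leftmost box of row $s$ not in the current outer shape and add it to the outer shape (a landing); otherwise replace the leftmost entry $x'$ of row $s$ greater than $x$ by $x$ (a bump) and append $(x',s+1)$ to $q'$; when $q$ is exhausted set $q:=q'$. All actions are performed one at a time, giving a time order. *)

theory Defs
  imports Main
begin

text \<open>Points of the plane are pairs (x,y) :: int * int; x is the (plane) row index,
y the column index. Boxes of the cylinder are orbits of points under translation
by multiples of (-k, n-k). Shapes, sets of boxes and tableaux are represented on
points, invariantly under this translation.\<close>

definition cyl_part :: "int \<Rightarrow> int \<Rightarrow> (int \<Rightarrow> int) \<Rightarrow> bool" where
  "cyl_part n k lam \<longleftrightarrow> (\<forall>m. lam (m + 1) \<le> lam m) \<and> (\<forall>m. lam m = lam (m + k) + n - k)"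

definition shape :: "(int \<Rightarrow> int) \<Rightarrow> (int \<times> int) set" where
  "shape lam = {(x, y). y \<le> lam x}"

definition orbit :: "int \<Rightarrow> int \<Rightarrow> int \<times> int \<Rightarrow> (int \<times> int) set" where
  "orbit n k p = {(fst p - j * k, snd p + j * (n - k)) | j. True}"

definition upd_orbit :: "int \<Rightarrow> int \<Rightarrow> (int \<times> int \<Rightarrow> 'b) \<Rightarrow> int \<times> int \<Rightarrow> 'b \<Rightarrow> (int \<times> int \<Rightarrow> 'b)" where
  "upd_orbit n k F p v = (\<lambda>q. if q \<in> orbit n k p then v else F q)"

definition cyl_tableau :: "int \<Rightarrow> int \<Rightarrow> (int \<Rightarrow> int) \<Rightarrow> (int \<Rightarrow> int) \<Rightarrow> (int \<times> int \<Rightarrow> 'a::linorder option) \<Rightarrow> bool" where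
  "cyl_tableau n k lam mu F \<longleftrightarrow>
     cyl_part n k lam \<and> cyl_part n k mu \<and> (\<forall>m. mu m \<le> lam m) \<and>
     (\<forall>x y. F (x, y) \<noteq> None \<longleftrightarrow> mu x < y \<and> y \<le> lam x) \<and>
     (\<forall>x y. F (x, y) = F (x - k, y + (n - k))) \<and>
     (\<forall>x y a b. F (x, y) = Some a \<longrightarrow> F (x, y + 1) = Some b \<longrightarrow> a \<le> b) \<and>
     (\<forall>x y a b. F (x, y) = Some a \<longrightarrow> F (x + 1, y) = Some b \<longrightarrow> a < b)"

definition multi_input :: "int \<Rightarrow> int \<Rightarrow> (int \<Rightarrow> int) \<Rightarrow> (int \<times> int) set \<Rightarrow> bool" where
  "multi_input n k mu S \<longleftrightarrow>
     (\<forall>x y. (x, y) \<in> S \<longleftrightarrow> (x - k, y + (n - k)) \<in> S) \<and>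
     S \<inter> shape mu = {} \<and>
     (\<forall>x x' y. (x, y) \<in> S \<longrightarrow> (x', y) \<in> S \<longrightarrow> x = x') \<and>
     (\<exists>nu. cyl_part n k nu \<and> shape nu = shape mu \<union> S)"

record 'a fmst =
  outer :: "(int \<times> int) set"
  inner :: "(int \<times> int) set"
  filling :: "int \<times> int \<Rightarrow> 'a option"
  cur :: "('a \<times> int) list"
  nxt :: "('a \<times> int) list"
  inslog :: "(int \<times> 'a) list"

definition init_box :: "int \<Rightarrow> int \<Rightarrow> int \<times> int \<Rightarrow> 'a fmst \<Rightarrow> 'a fmst" where
  "init_box n k b st =
     (if b \<in> outer st then
        st\<lparr> filling := upd_orbit n k (filling st) b None,
            inner := inner st \<union> orbit n k b,
            cur := cur st @ [(the (filling st b), fst b + 1)] \<rparr>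
      else
        st\<lparr> outer := outer st \<union> orbit n k b,
            inner := inner st \<union> orbit n k b \<rparr>)"

definition init_order :: "int \<Rightarrow> (int \<times> int) set \<Rightarrow> int \<Rightarrow> (int \<times> int) list" where
  "init_order k S r0 =
     concat (map (\<lambda>h. map (\<lambda>y. (h, y)) (sorted_list_of_set {y. (h, y) \<in> S})) [r0..r0 + k - 1])"

definition fm_init :: "int \<Rightarrow> int \<Rightarrow> (int \<Rightarrow> int) \<Rightarrow> (int \<Rightarrow> int) \<Rightarrow> (int \<times> int \<Rightarrow> 'a option)
    \<Rightarrow> (int \<times> int) set \<Rightarrow> int \<Rightarrow> 'a fmst" where
  "fm_init n k lam mu F S r0 =
     fold (init_box n k) (init_order k S r0)
       \<lparr> outer = shape lam, inner = shape mu, filling = F, cur = [], nxt = [], inslog = [] \<rparr>"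

inductive fm_step :: "int \<Rightarrow> int \<Rightarrow> 'a::linorder fmst \<Rightarrow> 'a fmst \<Rightarrow> bool" for n k where
  phase: "cur st = [] \<Longrightarrow> nxt st \<noteq> [] \<Longrightarrow>
     fm_step n k st (st\<lparr> cur := nxt st, nxt := [] \<rparr>)"
| land: "cur st = (x, s) # rest \<Longrightarrow>
     (\<forall>y v. filling st (s, y) = Some v \<longrightarrow> v \<le> x) \<Longrightarrow>
     y0 = (LEAST y. (s, y) \<notin> outer st) \<Longrightarrow>
     fm_step n k st (st\<lparr> outer := outer st \<union> orbit n k (s, y0),
                         filling := upd_orbit n k (filling st) (s, y0) (Some x),
                         cur := rest,
                         inslog := inslog st @ [(s mod k, x)] \<rparr>)"
| bump: "cur st = (x, s) # rest \<Longrightarrow>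
     \<not> (\<forall>y v. filling st (s, y) = Some v \<longrightarrow> v \<le> x) \<Longrightarrow>
     y1 = (LEAST y. \<exists>v. filling st (s, y) = Some v \<and> x < v) \<Longrightarrow>
     filling st (s, y1) = Some x' \<Longrightarrow>
     fm_step n k st (st\<lparr> filling := upd_orbit n k (filling st) (s, y1) (Some x),
                         cur := rest,
                         nxt := nxt st @ [(x', s + 1)],
                         inslog := inslog st @ [(s mod k, x)] \<rparr>)"

definition row_insertions :: "int \<Rightarrow> 'a fmst \<Rightarrow> 'a list" where
  "row_insertions r st = map snd (filter (\<lambda>e. fst e = r) (inslog st))"

end

theory Submission
  imports Defs "HOL-Library.Product_Lexorder"
begin

text \<open>We prove more: for every row class r, the entries already inserted into row r followed by
  the entries still queued for row r form a weakly increasing list. A landing only moves an entry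
  from the queue into the row. A bump of x in row s ejects the leftmost entry x' > x of that row
  and queues it for row s + 1. As x comes after all earlier insertions into row s, x' exceeds
  them all, so x' is an entry of R itself. A second invariant says that an entry of R in row s
  which exceeds everything inserted into row s bounds everything scheduled for row s + 1: this
  holds initially because the entries ejected by S from row s sit left of all surviving entries
  of R in row s, and a bump preserves it because x' is the leftmost entry of row s exceeding x.\<close>

definition shift_invariant :: "int \<Rightarrow> int \<Rightarrow> (int \<times> int \<Rightarrow> 'b) \<Rightarrow> bool" where
  "shift_invariant n k G \<longleftrightarrow> (\<forall>x y. G (x, y) = G (x - k, y + (n - k)))"

lemma shift_invariant_shift:
  assumes "shift_invariant n k G"
  shows "G (x, y) = G (x - j * k, y + j * (n - k))"
proof -
  have step: "G (a, b) = G (a - k, b + (n - k))" for a b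
    using assms unfolding shift_invariant_def by blast
  have "\<forall>x y. G (x, y) = G (x - j * k, y + j * (n - k))"
  proof (induction j rule: int_induct[where k = 0])
    case (step1 j)
    show ?case
    proof (intro allI)
      fix x y
      have "G (x - (j + 1) * k, y + (j + 1) * (n - k)) = G (x - j * k, y + j * (n - k))"
        using step[of "x - j * k" "y + j * (n - k)"] by (simp add: algebra_simps)
      then show "G (x, y) = G (x - (j + 1) * k, y + (j + 1) * (n - k))"
        using step1.IH by simp
    qed
  next
    case (step2 j)
    show ?case
    proof (intro allI)
      fix x y
      have "G (x - (j - 1) * k, y + (j - 1) * (n - k)) = G (x - j * k, y + j * (n - k))"
        using step[of "x - (j - 1) * k" "y + (j - 1) * (n - k)"] by (simp add: algebra_simps)
      then show "G (x, y) = G (x - (j - 1) * k, y + (j - 1) * (n - k))"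
        using step2.IH by simp
    qed
  qed simp
  then show ?thesis by blast
qed

lemma mem_orbit_iff: "q \<in> orbit n k p \<longleftrightarrow> (\<exists>j. q = (fst p - j * k, snd p + j * (n - k)))"
  unfolding orbit_def by auto

lemma shift_invariant_orbit:
  assumes "shift_invariant n k G" and "q \<in> orbit n k p"
  shows "G q = G p"
proof -
  obtain j where "q = (fst p - j * k, snd p + j * (n - k))"
    using assms(2) mem_orbit_iff by blast
  then show ?thesis using shift_invariant_shift[OF assms(1), of "fst p" "snd p" j] by simp
qed

lemma shift_invariant_mem_orbit: "shift_invariant n k (\<lambda>q. q \<in> orbit n k p)"
  unfolding shift_invariant_def
proof (intro allI iffI)
  fix x y
  assume "(x, y) \<in> orbit n k p"
  then obtain j where "(x, y) = (fst p - j * k, snd p + j * (n - k))" using mem_orbit_iff by blast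
  then show "(x - k, y + (n - k)) \<in> orbit n k p"
    unfolding mem_orbit_iff by (intro exI[of _ "j + 1"]) (auto simp: algebra_simps)
next
  fix x y
  assume "(x - k, y + (n - k)) \<in> orbit n k p"
  then obtain j where "(x - k, y + (n - k)) = (fst p - j * k, snd p + j * (n - k))"
    using mem_orbit_iff by blast
  then show "(x, y) \<in> orbit n k p"
    unfolding mem_orbit_iff by (intro exI[of _ "j - 1"]) (auto simp: algebra_simps)
qed

lemma shift_invariant_upd_orbit:
  "shift_invariant n k G \<Longrightarrow> shift_invariant n k (upd_orbit n k G p v)"
  using shift_invariant_mem_orbit[of n k p] unfolding shift_invariant_def upd_orbit_def by simp

lemma orbit_row_unique: "k \<noteq> 0 \<Longrightarrow> (x, y) \<in> orbit n k p \<Longrightarrow> (x, y') \<in> orbit n k p \<Longrightarrow> y = y'"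
  unfolding mem_orbit_iff by auto

lemma orbit_fst_mod: "q \<in> orbit n k p \<Longrightarrow> fst q mod k = fst p mod k"
  unfolding mem_orbit_iff by (auto simp: mod_eq_dvd_iff)

lemma orbit_meets_row:
  assumes "x mod k = fst p mod k"
  shows "\<exists>y. (x, y) \<in> orbit n k p"
proof -
  obtain j where "fst p - x = k * j" using assms mod_eq_dvd_iff by (metis dvdE)
  then have "(x, snd p + j * (n - k)) = (fst p - j * k, snd p + j * (n - k))"
    by (simp add: algebra_simps)
  then show ?thesis unfolding mem_orbit_iff by blast
qed

lemma bdd_above_orbit_row: "k \<noteq> 0 \<Longrightarrow> bdd_above {y. (x, y) \<in> orbit n k p}"
proof -
  assume k: "k \<noteq> 0"
  define y0 where "y0 = (SOME y. (x, y) \<in> orbit n k p)"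
  have "\<forall>y \<in> {y. (x, y) \<in> orbit n k p}. y \<le> y0"
  proof
    fix y assume "y \<in> {y. (x, y) \<in> orbit n k p}"
    then have "(x, y) \<in> orbit n k p" "(x, y0) \<in> orbit n k p"
      unfolding y0_def by (auto intro: someI)
    then show "y \<le> y0" using orbit_row_unique[OF k] by blast
  qed
  then show ?thesis unfolding bdd_above_def by blast
qed

lemma shift_invariant_shape: "cyl_part n k lam \<Longrightarrow> shift_invariant n k (\<lambda>q. q \<in> shape lam)"
proof -
  assume "cyl_part n k lam"
  then have "lam (x - k) = lam x + n - k" for x
    unfolding cyl_part_def by (metis diff_add_cancel)
  then show ?thesis unfolding shift_invariant_def shape_def by simp
qed

lemma int_Least_bounded_below:
  fixes P :: "int \<Rightarrow> bool"
  assumes "P a" and bound: "\<And>y. P y \<Longrightarrow> b \<le> y"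
  shows "P (LEAST y. P y) \<and> (\<forall>z. P z \<longrightarrow> (LEAST y. P y) \<le> z)"
proof -
  obtain m where m: "P m" "\<forall>z. P z \<longrightarrow> nat (m - b) \<le> nat (z - b)"
    using ex_has_least_nat[of P a "\<lambda>y. nat (y - b)"] assms(1) by blast
  then have least: "\<forall>z. P z \<longrightarrow> m \<le> z" using bound by fastforce
  then have "(LEAST y. P y) = m" using m(1) by (intro Least_equality) auto
  then show ?thesis using m(1) least by simp
qed

lemma mod_eq_in_window:
  fixes h h' r0 k :: int
  assumes "r0 \<le> h" "h < r0 + k" "r0 \<le> h'" "h' < r0 + k" "h mod k = h' mod k"
  shows "h = h'"
proof -
  have "(h - r0) mod k = (h' - r0) mod k" using assms(5) by (rule mod_diff_cong) simp
  then show ?thesis using assms(1-4) by simp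
qed

lemma succ_mod_eq_iff: "((a::int) + 1) mod k = (b + 1) mod k \<longleftrightarrow> a mod k = b mod k"
  by (metis add_diff_cancel_right' mod_add_cong mod_diff_cong)

lemma cyl_tableau_defined_iff:
  "cyl_tableau n k lam mu F \<Longrightarrow> F p \<noteq> None \<longleftrightarrow> p \<in> shape lam \<and> p \<notin> shape mu"
  unfolding cyl_tableau_def shape_def by (cases p) auto

lemma cyl_tableau_shape_subset: "cyl_tableau n k lam mu F \<Longrightarrow> shape mu \<subseteq> shape lam"
  unfolding cyl_tableau_def shape_def by (auto intro: order_trans)

lemma cyl_tableau_shift_invariant: "cyl_tableau n k lam mu F \<Longrightarrow> shift_invariant n k F"
  unfolding cyl_tableau_def shift_invariant_def by blast

lemma cyl_tableau_row_mono:
  assumes T: "cyl_tableau n k lam mu F" and Fa: "F (s, a) = Some p"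
    and "a \<le> b" and "F (s, b) = Some q"
  shows "p \<le> q"
  using assms(3,4)
proof (induction b arbitrary: q rule: int_ge_induct)
  case base
  then show ?case using Fa by simp
next
  case (step b)
  have dom: "\<forall>x y. F (x, y) \<noteq> None \<longleftrightarrow> mu x < y \<and> y \<le> lam x"
    and row: "\<forall>x y a b. F (x, y) = Some a \<longrightarrow> F (x, y + 1) = Some b \<longrightarrow> a \<le> b"
    using T unfolding cyl_tableau_def by blast+
  have "mu s < a" "b + 1 \<le> lam s" using dom Fa step.prems by (metis option.distinct(1))+
  then have "mu s < b \<and> b \<le> lam s" using step.hyps by simp
  then obtain r where r: "F (s, b) = Some r" using dom by blast
  then show ?case using step row by (meson order.trans)
qed

definition row_schedule :: "int \<Rightarrow> int \<Rightarrow> 'a fmst \<Rightarrow> 'a list" where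
  "row_schedule k r st =
     row_insertions r st @ map fst (filter (\<lambda>e. snd e mod k = r) (cur st @ nxt st))"

definition entries_traced :: "int \<Rightarrow> (int \<times> int \<Rightarrow> 'a option) \<Rightarrow> 'a fmst \<Rightarrow> bool" where
  "entries_traced k F st \<longleftrightarrow>
     (\<forall>s y v. filling st (s, y) = Some v \<longrightarrow>
        F (s, y) = Some v \<or> v \<in> set (row_insertions (s mod k) st))"

definition originals_dominate :: "int \<Rightarrow> (int \<times> int \<Rightarrow> 'a::linorder option) \<Rightarrow> 'a fmst \<Rightarrow> bool" where
  "originals_dominate k F st \<longleftrightarrow>
     (\<forall>s y v. filling st (s, y) = Some v \<longrightarrow> F (s, y) = Some v \<longrightarrow>
        (\<forall>u \<in> set (row_insertions (s mod k) st). u < v) \<longrightarrow>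
        (\<forall>w \<in> set (row_schedule k ((s + 1) mod k) st). w \<le> v))"

definition fm_invariant ::
    "int \<Rightarrow> int \<Rightarrow> (int \<Rightarrow> int) \<Rightarrow> (int \<Rightarrow> int) \<Rightarrow> (int \<times> int \<Rightarrow> 'a::linorder option) \<Rightarrow> 'a fmst \<Rightarrow> bool"
  where
  "fm_invariant n k lam mu F st \<longleftrightarrow>
     shift_invariant n k (filling st) \<and>
     (\<forall>r. sorted (row_schedule k r st)) \<and>
     entries_traced k F st \<and>
     originals_dominate k F st \<and>
     (\<forall>p. filling st p \<noteq> None \<longrightarrow> p \<notin> shape mu) \<and>
     (\<forall>s. bdd_above {y. (s, y) \<in> outer st}) \<and>
     shape lam \<subseteq> outer st"

lemma place_entry:
  fixes st st' :: "'a::order fmst"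
  assumes fill: "filling st' = upd_orbit n k (filling st) (s, y) (Some x)"
    and log: "\<And>r. row_insertions r st' = row_insertions r st @ (if s mod k = r then [x] else [])"
    and "shift_invariant n k (filling st)" and traced: "entries_traced k F st"
  shows "shift_invariant n k (filling st')" and "entries_traced k F st'"
proof -
  show "shift_invariant n k (filling st')"
    unfolding fill using assms(3) by (rule shift_invariant_upd_orbit)
  show "entries_traced k F st'"
    unfolding entries_traced_def
  proof (intro allI impI)
    fix s' y' v
    assume v: "filling st' (s', y') = Some v"
    show "F (s', y') = Some v \<or> v \<in> set (row_insertions (s' mod k) st')"
    proof (cases "(s', y') \<in> orbit n k (s, y)")
      case True
      then have "s' mod k = s mod k" and "v = x"
        using orbit_fst_mod[OF True] v fill by (simp_all add: upd_orbit_def)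
      then show ?thesis using log by simp
    next
      case False
      then have "filling st (s', y') = Some v" using v fill by (simp add: upd_orbit_def)
      then have "F (s', y') = Some v \<or> v \<in> set (row_insertions (s' mod k) st)"
        using traced unfolding entries_traced_def by blast
      moreover have "set (row_insertions (s' mod k) st) \<subseteq> set (row_insertions (s' mod k) st')"
        unfolding log set_append by (rule Un_upper1)
      ultimately show ?thesis by blast
    qed
  qed
qed

lemma place_entry_untouched:
  fixes st st' :: "'a::order fmst"
  assumes fill: "filling st' = upd_orbit n k (filling st) (s, y) (Some x)"
    and log: "\<And>r. row_insertions r st' = row_insertions r st @ (if s mod k = r then [x] else [])"
    and v: "filling st' (s', y') = Some v"
    and above: "\<forall>u \<in> set (row_insertions (s' mod k) st'). u < v"
  shows "filling st (s', y') = Some v \<and> (\<forall>u \<in> set (row_insertions (s' mod k) st). u < v)"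
proof -
  have "(s', y') \<notin> orbit n k (s, y)"
  proof
    assume o: "(s', y') \<in> orbit n k (s, y)"
    then have "v = x" using v fill by (simp add: upd_orbit_def)
    moreover have "s' mod k = s mod k" using orbit_fst_mod[OF o] by simp
    then have "x < v" using above log by simp
    ultimately show False by simp
  qed
  then have "filling st (s', y') = Some v" using v fill by (simp add: upd_orbit_def)
  moreover have "set (row_insertions (s' mod k) st) \<subseteq> set (row_insertions (s' mod k) st')"
    unfolding log set_append by (rule Un_upper1)
  ultimately show ?thesis using above by blast
qed

lemma fm_invariant_land:
  assumes "k \<noteq> 0" and T: "cyl_tableau n k lam mu F" and I: "fm_invariant n k lam mu F st"
    and cur: "cur st = (x, s) # rest"
    and y0: "y0 = (LEAST y. (s, y) \<notin> outer st)"
    and st': "st' = st\<lparr> outer := outer st \<union> orbit n k (s, y0),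
                         filling := upd_orbit n k (filling st) (s, y0) (Some x),
                         cur := rest,
                         inslog := inslog st @ [(s mod k, x)] \<rparr>"
  shows "fm_invariant n k lam mu F st'"
proof -
  have log: "row_insertions r st' = row_insertions r st @ (if s mod k = r then [x] else [])" for r
    using st' unfolding row_insertions_def by simp
  have fill: "filling st' = upd_orbit n k (filling st) (s, y0) (Some x)" using st' by simp
  have schedule: "row_schedule k r st' = row_schedule k r st" for r
    using st' cur unfolding row_schedule_def row_insertions_def by simp
  have bdd: "\<forall>s. bdd_above {y. (s, y) \<in> outer st}" and lam_outer: "shape lam \<subseteq> outer st"
    and off_mu: "\<forall>p. filling st p \<noteq> None \<longrightarrow> p \<notin> shape mu"
    using I by (simp_all add: fm_invariant_def)
  obtain B where "\<forall>y \<in> {y. (s, y) \<in> outer st}. y \<le> B" using bdd unfolding bdd_above_def by blast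
  then have "(s, B + 1) \<notin> outer st" by fastforce
  moreover have "lam s \<le> y" if "(s, y) \<notin> outer st" for y
  proof -
    have "(s, y) \<notin> shape lam" using that lam_outer by blast
    then show ?thesis unfolding shape_def by simp
  qed
  ultimately have "(s, y0) \<notin> outer st"
    using int_Least_bounded_below[of "\<lambda>y. (s, y) \<notin> outer st"] y0 by blast
  then have "(s, y0) \<notin> shape mu" using lam_outer cyl_tableau_shape_subset[OF T] by blast
  then have orbit_off_mu: "p \<notin> shape mu" if "p \<in> orbit n k (s, y0)" for p
    using shift_invariant_orbit[OF shift_invariant_shape that] T
    unfolding cyl_tableau_def by blast
  have "originals_dominate k F st'"
    using I place_entry_untouched[OF fill log] unfolding fm_invariant_def originals_dominate_def schedule
    by blast
  moreover have "\<forall>p. filling st' p \<noteq> None \<longrightarrow> p \<notin> shape mu"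
    using off_mu orbit_off_mu unfolding fill upd_orbit_def by auto
  moreover have "bdd_above {y. (s', y) \<in> outer st'}" for s'
    using bdd bdd_above_orbit_row[OF \<open>k \<noteq> 0\<close>, of s' n "(s, y0)"] st'
    by (simp add: Collect_disj_eq)
  ultimately show ?thesis
    using I place_entry[OF fill log] lam_outer st' unfolding fm_invariant_def schedule by auto
qed

context
  fixes n k :: int and lam mu :: "int \<Rightarrow> int" and F :: "int \<times> int \<Rightarrow> 'a::linorder option"
    and st st' :: "'a fmst" and x x' :: 'a and s y1 :: int and rest :: "('a \<times> int) list"
  assumes T: "cyl_tableau n k lam mu F" and I: "fm_invariant n k lam mu F st"
    and cur: "cur st = (x, s) # rest"
    and exceeds: "\<not> (\<forall>y v. filling st (s, y) = Some v \<longrightarrow> v \<le> x)"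
    and y1: "y1 = (LEAST y. \<exists>v. filling st (s, y) = Some v \<and> x < v)"
    and x': "filling st (s, y1) = Some x'"
    and st': "st' = st\<lparr> filling := upd_orbit n k (filling st) (s, y1) (Some x),
                         cur := rest,
                         nxt := nxt st @ [(x', s + 1)],
                         inslog := inslog st @ [(s mod k, x)] \<rparr>"
begin

lemma bump_ejects_dominating_original:
  shows "x < x'"
    and "\<And>y v. filling st (s, y) = Some v \<Longrightarrow> x < v \<Longrightarrow> y1 \<le> y"
    and "F (s, y1) = Some x'"
    and "\<forall>w \<in> set (row_schedule k ((s + 1) mod k) st). w \<le> x'"
proof -
  let ?P = "\<lambda>y. \<exists>v. filling st (s, y) = Some v \<and> x < v"
  have "sorted (row_schedule k (s mod k) st)" using I unfolding fm_invariant_def by blast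
  then have below_x: "\<forall>u \<in> set (row_insertions (s mod k) st). u \<le> x"
    using cur unfolding row_schedule_def by (simp add: sorted_append)
  obtain ya where "?P ya" using exceeds by force
  moreover have "mu s \<le> y" if "?P y" for y
    using that I unfolding fm_invariant_def shape_def by force
  ultimately have least: "?P y1" "\<forall>z. ?P z \<longrightarrow> y1 \<le> z"
    using int_Least_bounded_below[of ?P] y1 by blast+
  then show "x < x'" using x' by auto
  show "\<And>y v. filling st (s, y) = Some v \<Longrightarrow> x < v \<Longrightarrow> y1 \<le> y" using least by blast
  have above_ins: "\<forall>u \<in> set (row_insertions (s mod k) st). u < x'"
    using below_x \<open>x < x'\<close> by fastforce
  then have "x' \<notin> set (row_insertions (s mod k) st)" by blast
  then show Fx': "F (s, y1) = Some x'"
    using I x' unfolding fm_invariant_def entries_traced_def by blast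
  show "\<forall>w \<in> set (row_schedule k ((s + 1) mod k) st). w \<le> x'"
    using I x' Fx' above_ins unfolding fm_invariant_def originals_dominate_def by blast
qed

lemma bump_row_insertions:
  "row_insertions r st' = row_insertions r st @ (if s mod k = r then [x] else [])"
  using st' unfolding row_insertions_def by simp

lemma bump_filling: "filling st' = upd_orbit n k (filling st) (s, y1) (Some x)"
  using st' by simp

lemma bump_row_schedule:
  "row_schedule k r st' = row_schedule k r st @ (if (s + 1) mod k = r then [x'] else [])"
  using st' cur unfolding row_schedule_def row_insertions_def by simp

lemma originals_dominate_bump: "originals_dominate k F st'"
  unfolding originals_dominate_def
proof (intro allI impI ballI)
  fix s' y v w
  assume v: "filling st' (s', y) = Some v" and Fv: "F (s', y) = Some v"
    and above: "\<forall>u \<in> set (row_insertions (s' mod k) st'). u < v"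
    and w: "w \<in> set (row_schedule k ((s' + 1) mod k) st')"
  have old: "filling st (s', y) = Some v" "\<forall>u \<in> set (row_insertions (s' mod k) st). u < v"
    using place_entry_untouched[OF bump_filling bump_row_insertions v above] by blast+
  show "w \<le> v"
  proof (cases "w \<in> set (row_schedule k ((s' + 1) mod k) st)")
    case True
    then show ?thesis using I old Fv unfolding fm_invariant_def originals_dominate_def by blast
  next
    case False
    then have "w = x'" and "(s + 1) mod k = (s' + 1) mod k"
      using w unfolding bump_row_schedule by (auto split: if_splits)
    then have row: "s mod k = s' mod k" by (simp add: succ_mod_eq_iff)
    then obtain y' where o: "(s, y') \<in> orbit n k (s', y)" using orbit_meets_row by force
    have "shift_invariant n k (filling st)" using I unfolding fm_invariant_def by blast
    from shift_invariant_orbit[OF this o] have "filling st (s, y') = Some v" using old(1) by simp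
    moreover have "F (s, y') = Some v"
      using shift_invariant_orbit[OF cyl_tableau_shift_invariant[OF T] o] Fv by simp
    moreover have "x < v" using above row unfolding bump_row_insertions by simp
    ultimately show ?thesis
      using bump_ejects_dominating_original(2,3) cyl_tableau_row_mono[OF T] \<open>w = x'\<close> by blast
  qed
qed

lemma fm_invariant_bump: "fm_invariant n k lam mu F st'"
proof -
  have "sorted (row_schedule k r st')" for r
    using I bump_ejects_dominating_original(4)
    unfolding fm_invariant_def bump_row_schedule by (auto simp: sorted_append)
  moreover have "p \<notin> shape mu" if "filling st' p \<noteq> None" for p
  proof -
    have "filling st p \<noteq> None"
    proof (cases "p \<in> orbit n k (s, y1)")
      case True
      have "shift_invariant n k (filling st)" using I unfolding fm_invariant_def by blast
      from shift_invariant_orbit[OF this True] show ?thesis using x' by simp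
    next
      case False
      then show ?thesis using that bump_filling by (simp add: upd_orbit_def)
    qed
    then show ?thesis using I unfolding fm_invariant_def by blast
  qed
  ultimately show ?thesis
    using I place_entry[OF bump_filling bump_row_insertions] originals_dominate_bump st'
    unfolding fm_invariant_def by auto
qed

end

lemma fm_invariant_step:
  assumes "k \<noteq> 0" and T: "cyl_tableau n k lam mu F" and I: "fm_invariant n k lam mu F st"
    and "fm_step n k st st'"
  shows "fm_invariant n k lam mu F st'"
  using assms(4)
proof cases
  case phase
  then have "row_schedule k r st' = row_schedule k r st" "row_insertions r st' = row_insertions r st"
    for r
    unfolding row_schedule_def row_insertions_def by simp_all
  then show ?thesis
    using I phase unfolding fm_invariant_def entries_traced_def originals_dominate_def by simp
next
  case land
  then show ?thesis using fm_invariant_land[OF assms(1) T I] by blast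
next
  case bump
  then show ?thesis using fm_invariant_bump[OF T I] by blast
qed

definition init_state ::
    "int \<Rightarrow> int \<Rightarrow> (int \<Rightarrow> int) \<Rightarrow> (int \<Rightarrow> int) \<Rightarrow> (int \<times> int \<Rightarrow> 'a option) \<Rightarrow> (int \<times> int) list \<Rightarrow> 'a fmst"
  where
  "init_state n k lam mu F ps =
     \<lparr>outer = shape lam \<union> (\<Union>p \<in> set ps. orbit n k p),
      inner = shape mu \<union> (\<Union>p \<in> set ps. orbit n k p),
      filling = (\<lambda>q. if q \<in> (\<Union>p \<in> set ps. orbit n k p) then None else F q),
      cur = map (\<lambda>b. (the (F b), fst b + 1)) (filter (\<lambda>b. b \<in> shape lam) ps),
      nxt = [], inslog = []\<rparr>"

lemma init_box_init_state:
  assumes T: "cyl_tableau n k lam mu F" and new: "\<forall>p \<in> set ps. b \<notin> orbit n k p"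
  shows "init_box n k b (init_state n k lam mu F ps) = init_state n k lam mu F (ps @ [b])"
proof (cases "b \<in> shape lam")
  case True
  have "orbit n k b \<subseteq> shape lam"
    using True shift_invariant_orbit[OF shift_invariant_shape] T unfolding cyl_tableau_def by blast
  then show ?thesis using True new unfolding init_box_def init_state_def upd_orbit_def
    by (auto simp: fun_eq_iff)
next
  case False
  then have "F q = None" if "q \<in> orbit n k b" for q
    using shift_invariant_orbit[OF cyl_tableau_shift_invariant[OF T] that]
      cyl_tableau_defined_iff[OF T, of b] by auto
  then show ?thesis using False new unfolding init_box_def init_state_def
    by (auto simp: fun_eq_iff)
qed

lemma fold_init_box_init_state:
  assumes T: "cyl_tableau n k lam mu F"
  shows "sorted_wrt (\<lambda>a b. b \<notin> orbit n k a) (ps @ bs) \<Longrightarrow>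
    fold (init_box n k) bs (init_state n k lam mu F ps) = init_state n k lam mu F (ps @ bs)"
proof (induction bs arbitrary: ps)
  case (Cons b bs)
  then have "\<forall>p \<in> set ps. b \<notin> orbit n k p" by (simp add: sorted_wrt_append)
  then show ?case using Cons init_box_init_state[OF T] by simp
qed simp

lemma sorted_wrt_concat_rows:
  fixes g :: "'a::linorder \<Rightarrow> 'b::linorder list"
  assumes "\<And>h. sorted_wrt (<) (g h)"
  shows "sorted_wrt (<) hs \<Longrightarrow> sorted_wrt (<) (concat (map (\<lambda>h. map (\<lambda>y. (h, y)) (g h)) hs))"
proof (induction hs)
  case (Cons h hs)
  then show ?case
    using assms by (auto simp: sorted_wrt_append sorted_wrt_map less_prod_def)
qed simp

lemma set_init_order:
  assumes "\<And>h. finite {y. (h, y) \<in> S}"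
  shows "set (init_order k S r0) = {p \<in> S. r0 \<le> fst p \<and> fst p < r0 + k}"
  unfolding init_order_def using assms by auto

lemma sorted_init_order: "sorted_wrt (<) (init_order k S r0)"
  unfolding init_order_def
  by (rule sorted_wrt_concat_rows) (simp_all add: strict_sorted_list_of_set)

lemma Union_orbit_window:
  assumes "0 < k" and S: "shift_invariant n k (\<lambda>q. q \<in> S)"
  shows "(\<Union>p \<in> {p \<in> S. r0 \<le> fst p \<and> fst p < r0 + k}. orbit n k p) = S"
proof
  show "(\<Union>p \<in> {p \<in> S. r0 \<le> fst p \<and> fst p < r0 + k}. orbit n k p) \<subseteq> S"
    using shift_invariant_orbit[OF S] by blast
  show "S \<subseteq> (\<Union>p \<in> {p \<in> S. r0 \<le> fst p \<and> fst p < r0 + k}. orbit n k p)"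
  proof
    fix q assume "q \<in> S"
    define j where "j = (fst q - r0) div k"
    define p where "p = (fst q - j * k, snd q + j * (n - k))"
    have "p \<in> S" using \<open>q \<in> S\<close> shift_invariant_shift[OF S, of "fst q" "snd q" j]
      unfolding p_def by simp
    moreover have "fst p = r0 + (fst q - r0) mod k"
      unfolding p_def j_def by (simp add: minus_div_mult_eq_mod[symmetric] algebra_simps)
    then have "r0 \<le> fst p \<and> fst p < r0 + k" using \<open>0 < k\<close> by simp
    moreover have "q \<in> orbit n k p"
      unfolding mem_orbit_iff p_def by (intro exI[of _ "- j"]) (simp add: algebra_simps)
    ultimately show "q \<in> (\<Union>p \<in> {p \<in> S. r0 \<le> fst p \<and> fst p < r0 + k}. orbit n k p)" by blast
  qed
qed

lemma multi_input_row_finite: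
  assumes "multi_input n k mu S"
  shows "finite {y. (h, y) \<in> S}"
proof -
  obtain nu where "shape nu = shape mu \<union> S" and "S \<inter> shape mu = {}"
    using assms unfolding multi_input_def by blast
  then have "(h, y) \<in> shape nu \<and> (h, y) \<notin> shape mu" if "(h, y) \<in> S" for y
    using that by blast
  then have "{y. (h, y) \<in> S} \<subseteq> {mu h<..nu h}" unfolding shape_def by fastforce
  then show ?thesis by (rule finite_subset) simp
qed

lemma sorted_init_order_orbits:
  assumes "0 < k" and fin: "\<And>h. finite {y. (h, y) \<in> S}"
  shows "sorted_wrt (\<lambda>a b. b \<notin> orbit n k a) (init_order k S r0)"
proof (rule sorted_wrt_mono_rel[OF _ sorted_init_order])
  fix a b
  assume ab: "a \<in> set (init_order k S r0)" "b \<in> set (init_order k S r0)" "a < b"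
  show "b \<notin> orbit n k a"
  proof
    assume o: "b \<in> orbit n k a"
    then obtain j where j: "b = (fst a - j * k, snd a + j * (n - k))" using mem_orbit_iff by blast
    have "fst b = fst a"
      using ab(1,2) orbit_fst_mod[OF o] mod_eq_in_window unfolding set_init_order[OF fin] by auto
    then have "j = 0" using j \<open>0 < k\<close> by simp
    then show False using j ab(3) by simp
  qed
qed

lemma fm_init_eq_init_state:
  assumes "0 < k" and T: "cyl_tableau n k lam mu F" and M: "multi_input n k mu S"
  shows "fm_init n k lam mu F S r0 = init_state n k lam mu F (init_order k S r0)"
proof -
  have "\<lparr>outer = shape lam, inner = shape mu, filling = F, cur = [], nxt = [], inslog = []\<rparr>
      = init_state n k lam mu F []"
    unfolding init_state_def by simp
  then show ?thesis
    using fold_init_box_init_state[OF T, of "[]"]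
      sorted_init_order_orbits[OF \<open>0 < k\<close> multi_input_row_finite[OF M]]
    unfolding fm_init_def by simp
qed

lemma init_schedule_sorted:
  assumes T: "cyl_tableau n k lam mu F" and sorted_bs: "sorted_wrt (<) bs"
    and window: "set bs \<subseteq> {p \<in> S. r0 \<le> fst p \<and> fst p < r0 + k}"
    and "S \<inter> shape mu = {}"
  shows "sorted (map (\<lambda>b. the (F b)) (filter (\<lambda>b. b \<in> shape lam \<and> (fst b + 1) mod k = r) bs))"
proof -
  let ?P = "\<lambda>b. b \<in> shape lam \<and> (fst b + 1) mod k = r"
  have "the (F a) \<le> the (F b)"
    if a: "a \<in> set (filter ?P bs)" and b: "b \<in> set (filter ?P bs)" and "a < b" for a b
  proof -
    have "(fst a + 1) mod k = (fst b + 1) mod k" using a b by simp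
    then have "fst a mod k = fst b mod k" by (simp add: succ_mod_eq_iff)
    moreover have "r0 \<le> fst a" "fst a < r0 + k" "r0 \<le> fst b" "fst b < r0 + k"
      using a b window by auto
    ultimately have "fst a = fst b" using mod_eq_in_window by blast
    then have "snd a \<le> snd b" using \<open>a < b\<close> by (simp add: less_prod_def)
    moreover have "a \<in> shape lam - shape mu" "b \<in> shape lam - shape mu"
      using a b window assms(4) by auto
    then obtain va vb where "F a = Some va" "F b = Some vb"
      using cyl_tableau_defined_iff[OF T] by (metis DiffE not_None_eq)
    ultimately show ?thesis
      using cyl_tableau_row_mono[OF T, of "fst a" "snd a" va "snd b" vb] \<open>fst a = fst b\<close>
      by (metis option.sel prod.collapse)
  qed
  then show ?thesis
    unfolding sorted_map by (rule sorted_wrt_mono_rel[OF _ sorted_wrt_filter[OF sorted_bs]])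
qed

lemma init_originals_dominate:
  assumes T: "cyl_tableau n k lam mu F" and S: "shift_invariant n k (\<lambda>q. q \<in> S)"
    and nu: "shape nu = shape mu \<union> S" and "S \<inter> shape mu = {}" and "set bs \<subseteq> S"
    and fill: "\<And>q. filling st q = (if q \<in> S then None else F q)"
    and schedule: "\<And>r. row_schedule k r st =
       map (\<lambda>b. the (F b)) (filter (\<lambda>b. b \<in> shape lam \<and> (fst b + 1) mod k = r) bs)"
  shows "originals_dominate k F st"
  unfolding originals_dominate_def
proof (intro allI impI ballI)
  \<comment> \<open>Entries scheduled for row s + 1 come from boxes of S in row s, which lie in columns
    at most nu s, whereas the surviving entries of R in row s lie beyond nu s.\<close>
  fix s y v w
  assume v: "filling st (s, y) = Some v" and Fv: "F (s, y) = Some v"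
    and "w \<in> set (row_schedule k ((s + 1) mod k) st)"
  then obtain b where b: "b \<in> set bs" "b \<in> shape lam" "(fst b + 1) mod k = (s + 1) mod k"
      "w = the (F b)"
    unfolding schedule by auto
  then have "s mod k = fst b mod k" by (simp add: succ_mod_eq_iff)
  then obtain y' where o: "(s, y') \<in> orbit n k b" using orbit_meets_row by blast
  have "b \<in> S" using b(1) \<open>set bs \<subseteq> S\<close> by blast
  then have "(s, y') \<in> shape nu" using shift_invariant_orbit[OF S o] nu by blast
  moreover have "(s, y) \<notin> shape nu"
    using v Fv fill[of "(s, y)"] nu cyl_tableau_defined_iff[OF T, of "(s, y)"]
    by (auto split: if_splits)
  ultimately have "y' \<le> y" unfolding shape_def by simp
  moreover have "F (s, y') = Some w"
    using shift_invariant_orbit[OF cyl_tableau_shift_invariant[OF T] o] b(2,4) \<open>b \<in> S\<close>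
      assms(4) cyl_tableau_defined_iff[OF T, of b] by auto
  ultimately show "w \<le> v" using cyl_tableau_row_mono[OF T _ _ Fv] by blast
qed

lemma fm_invariant_fm_init:
  assumes "0 < k" and T: "cyl_tableau n k lam mu F" and M: "multi_input n k mu S"
  shows "fm_invariant n k lam mu F (fm_init n k lam mu F S r0)"
proof -
  define bs where "bs = init_order k S r0"
  define st where "st = fm_init n k lam mu F S r0"
  have S: "shift_invariant n k (\<lambda>q. q \<in> S)" and Smu: "S \<inter> shape mu = {}"
    using M unfolding multi_input_def shift_invariant_def by blast+
  obtain nu where nu: "shape nu = shape mu \<union> S" using M unfolding multi_input_def by blast
  have window: "set bs = {p \<in> S. r0 \<le> fst p \<and> fst p < r0 + k}"
    unfolding bs_def using set_init_order multi_input_row_finite[OF M] by blast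
  have orbits: "(\<Union>p \<in> set bs. orbit n k p) = S"
    using Union_orbit_window[OF \<open>0 < k\<close> S] window by simp
  have st: "st = init_state n k lam mu F bs"
    unfolding st_def bs_def by (rule fm_init_eq_init_state[OF assms])
  have fill: "filling st q = (if q \<in> S then None else F q)" for q
    unfolding st init_state_def orbits by simp
  have schedule: "row_schedule k r st =
      map (\<lambda>b. the (F b)) (filter (\<lambda>b. b \<in> shape lam \<and> (fst b + 1) mod k = r) bs)" for r
    unfolding st init_state_def row_schedule_def row_insertions_def
    by (simp add: filter_map o_def filter_filter)
  have "shift_invariant n k (filling st)"
    using S cyl_tableau_shift_invariant[OF T] unfolding shift_invariant_def fill by simp
  moreover have "sorted (row_schedule k r st)" for r
    unfolding schedule using init_schedule_sorted[OF T _ _ Smu] sorted_init_order window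
    unfolding bs_def by blast
  moreover have "entries_traced k F st" "\<forall>p. filling st p \<noteq> None \<longrightarrow> p \<notin> shape mu"
    using cyl_tableau_defined_iff[OF T] unfolding entries_traced_def fill by auto
  moreover have "originals_dominate k F st"
    using init_originals_dominate[OF T S nu Smu _ fill schedule] window by blast
  moreover have outer: "outer st = shape lam \<union> shape nu"
    using nu cyl_tableau_shape_subset[OF T] unfolding st init_state_def orbits by auto
  then have "bdd_above {y. (s, y) \<in> outer st}" for s
    by (simp add: shape_def Collect_disj_eq atMost_def[symmetric])
  moreover have "shape lam \<subseteq> outer st" using outer by blast
  ultimately show ?thesis unfolding fm_invariant_def st_def by auto
qed

lemma sorted_row_insertions: "fm_invariant n k lam mu F st \<Longrightarrow> sorted (row_insertions r st)"
  unfolding fm_invariant_def row_schedule_def by (auto simp: sorted_append)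

theorem mainTheorem14:
  fixes n k r0 :: int
    and lam mu :: "int \<Rightarrow> int"
    and F :: "int \<times> int \<Rightarrow> 'a::linorder option"
    and S :: "(int \<times> int) set"
    and st :: "'a fmst"
  assumes "1 \<le> k" and "k < n"
    and "cyl_tableau n k lam mu F"
    and "multi_input n k mu S"
    and "(fm_step n k)\<^sup>*\<^sup>* (fm_init n k lam mu F S r0) st"
  shows "\<forall>r. sorted (row_insertions r st)"
proof -
  have "0 < k" using assms(1) by simp
  have "fm_invariant n k lam mu F st"
    using assms(5)
  proof (induction rule: rtranclp_induct)
    case base
    show ?case by (rule fm_invariant_fm_init[OF \<open>0 < k\<close> assms(3,4)])
  next
    case step
    then show ?case using fm_invariant_step[OF _ assms(3)] \<open>0 < k\<close> by simp
  qed
  then show ?thesis using sorted_row_insertions by blast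
qed

end
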